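(* Let $\mu\ge 1$, $x\ge 0$, $y>0$. Then $\dfrac{\partial^2 Q_{\mu}(x,y)}{\partial y^2}>0$ if $y>x+\mu-1$, and $\dfrac{\partial^2 Q_{\mu}(x,y)}{\partial y^2}<0$ if $y<x+\mu-2$. If moreover $\mu\ge 3/2$, then $\dfrac{\partial^2 Q_{\mu}(x,y)}{\partial y^2}<0$ whenever $y<x+\mu-3/2$.
   Context: For real $\mu$, $x>0$, $y\ge 0$, the generalized Marcum $Q$-function is $Q_{\mu}(x,y)=x^{\frac12(1-\mu)}\int_y^{\infty} t^{\frac12(\mu-1)}e^{-t-x}I_{\mu-1}(2\sqrt{xt})\,dt$, where $I_\nu$ is the modified Bessel function of the first kind; at $x=0$ it is defined by continuity, $Q_\mu(0,y)=\Gamma(\mu,y)/\Gamma(\mu)$. *)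

theory Defs
  imports "HOL-Analysis.Analysis"
begin

text \<open>Modified Bessel function of the first kind, via its power series
  I_nu(z) = sum_k (z/2)^(2k+nu) / (k! Gamma(k+nu+1)), for z > 0
  (rGamma = 1/Gamma, entire).\<close>
definition besselI :: "real \<Rightarrow> real \<Rightarrow> real" where
  "besselI \<nu> z = (\<Sum>k. (z / 2) powr (2 * real k + \<nu>) * rGamma (real k + \<nu> + 1) / fact k)"

definition upper_Gamma :: "real \<Rightarrow> real \<Rightarrow> real" where
  "upper_Gamma a y = (LBINT t:{y..}. t powr (a - 1) * exp (- t))"

definition marcumQ :: "real \<Rightarrow> real \<Rightarrow> real \<Rightarrow> real" where
  "marcumQ \<mu> x y =
     (if x = 0 then upper_Gamma \<mu> y / Gamma \<mu>
      else x powr ((1 - \<mu>) / 2) *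
        (LBINT t:{y..}. t powr ((\<mu> - 1) / 2) * exp (- t - x) * besselI (\<mu> - 1) (2 * sqrt (x * t))))"

end

theory Submission
  imports Defs
begin

text \<open>Writing \<open>c = \<mu> - 1\<close>, differentiation of the tail integral gives
  \<open>d\<^sup>2Q/dy\<^sup>2 = -exp(-x-y) y^(c-1) E\<close> with \<open>E = (c - y) A + M1\<close>, where \<open>A\<close>, \<open>M1\<close>, \<open>M2\<close>
  are the zeroth, first and second moments of the nonnegative terms
  \<open>u k = (xy)^k / (k! \<Gamma>(k+c+1))\<close> of the Bessel series. The recurrence
  \<open>xy u k = (k+1)(k+1+c) u (k+1)\<close> gives \<open>xy A = M2 + c M1\<close>; applied to the antidiagonals
  of the Cauchy square of \<open>u\<close>, it also gives their spread around \<open>n/2\<close> in closed form, whence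
  \<open>0 \<le> A M2 - M1\<^sup>2 \<le> A M1\<close>, and \<open>A M2 - M1\<^sup>2 \<le> (A M1 + c A\<^sup>2)/2\<close> when \<open>c \<ge> 1/2\<close>.
  Played off against \<open>xy A = M2 + c M1\<close>, these variance bounds force the sign of \<open>E\<close>.\<close>

lemma sum_atMost_reflect: "(\<Sum>j\<le>n. g j) = (\<Sum>j\<le>n. g (n - j))" for g :: "nat \<Rightarrow> real"
  by (rule sum.reindex_bij_witness[where i="\<lambda>i. n - i" and j="\<lambda>i. n - i"]) auto

lemma recurrence_convolution_telescope:
  fixes u :: "nat \<Rightarrow> real" and c s :: real and n :: nat
  assumes rec: "\<And>k. s * u k = (real k + 1) * (real k + 1 + c) * u (Suc k)"
  defines "v \<equiv> \<lambda>j. u j * u (n - j)"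
  shows "(\<Sum>j\<le>n. v j * (real j * (real n - real j) * (real n - real j + c)
                          - real j * (real j + c) * (real j - 1))) = 0"
proof -
  have shift: "v (Suc j) * ((real j + 1) * (real j + 1 + c)) = v j * ((real n - real j) * (real n - real j + c))"
    if "j < n" for j
  proof -
    have r: "s * u (n - Suc j) = (real n - real j) * (real n - real j + c) * u (n - j)"
      using rec[of "n - Suc j"] that by (simp add: Suc_diff_Suc of_nat_diff)
    have "v (Suc j) * ((real j + 1) * (real j + 1 + c)) = (s * u j) * u (n - Suc j)"
      unfolding v_def using rec[of j] by (simp add: algebra_simps)
    also have "\<dots> = u j * (s * u (n - Suc j))" by simp
    finally show ?thesis unfolding r v_def by simp
  qed
  \<comment> \<open>Multiply \<open>shift\<close> by \<open>j\<close> and sum over \<open>j < n\<close>; the left side is the right one shifted by one.\<close>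
  have "(\<Sum>j\<le>n. v j * (real j * (real j + c) * (real j - 1)))
      = (\<Sum>j<n. v (Suc j) * (real (Suc j) * (real (Suc j) + c) * (real (Suc j) - 1)))"
    by (simp add: lessThan_Suc_atMost[symmetric] sum.lessThan_Suc_shift del: sum.lessThan_Suc)
  also have "\<dots> = (\<Sum>j<n. v (Suc j) * ((real j + 1) * (real j + 1 + c)) * real j)"
    by (simp add: algebra_simps)
  also have "\<dots> = (\<Sum>j<n. v j * ((real n - real j) * (real n - real j + c)) * real j)"
    by (intro sum.cong refl) (simp add: shift)
  also have "\<dots> = (\<Sum>j\<le>n. v j * (real j * (real n - real j) * (real n - real j + c)))"
    by (simp add: lessThan_Suc_atMost[symmetric] algebra_simps)
  finally show ?thesis by (simp add: right_diff_distrib sum_subtractf)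
qed

lemma recurrence_convolution_identity:
  fixes u :: "nat \<Rightarrow> real" and c s :: real and n :: nat
  assumes rec: "\<And>k. s * u k = (real k + 1) * (real k + 1 + c) * u (Suc k)"
  defines "v \<equiv> \<lambda>j. u j * u (n - j)"
  shows "(real n + c - 1/2) * (\<Sum>j\<le>n. v j * (2 * real j - real n)^2)
         = real n * (real n + 2*c) / 2 * (\<Sum>j\<le>n. v j)"
proof -
  define P where "P = (\<lambda>j::nat. real j * (real n - real j) * (real n - real j + c)
                          - real j * (real j + c) * (real j - 1))"
  have sum_P: "(\<Sum>j\<le>n. v j * P j) = 0"
    unfolding P_def v_def by (rule recurrence_convolution_telescope[OF rec])
  have "(\<Sum>j\<le>n. v j * P (n - j)) = (\<Sum>j\<le>n. v (n - j) * P (n - j))"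
    by (intro sum.cong refl) (simp add: v_def)
  also have "\<dots> = 0"
    using sum_P sum_atMost_reflect[of "\<lambda>j. v j * P j"] by simp
  finally have sum_P_reflected: "(\<Sum>j\<le>n. v j * P (n - j)) = 0" .
  define K1 where "K1 = -(real n + c - 1/2)"
  define K2 where "K2 = real n * (real n + 2*c) / 2"
  have P_sym: "P j + P (n - j) = K1 * (2 * real j - real n)^2 + K2" if "j \<le> n" for j
    using that by (simp add: P_def K1_def K2_def of_nat_diff power2_eq_square field_simps)
  have "0 = (\<Sum>j\<le>n. v j * (P j + P (n - j)))"
    using sum_P sum_P_reflected by (simp add: distrib_left sum.distrib)
  also have "\<dots> = (\<Sum>j\<le>n. v j * (K1 * (2 * real j - real n)^2 + K2))"
    by (intro sum.cong refl) (simp add: P_sym)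
  also have "\<dots> = K1 * (\<Sum>j\<le>n. v j * (2 * real j - real n)^2) + K2 * (\<Sum>j\<le>n. v j)"
    by (simp add: distrib_left sum.distrib sum_distrib_left mult.left_commute mult.commute[of "v _"])
  finally show ?thesis by (simp add: K1_def K2_def) argo
qed

lemma recurrence_convolution_bounds:
  fixes u :: "nat \<Rightarrow> real" and c s :: real and n :: nat
  assumes rec: "\<And>k. s * u k = (real k + 1) * (real k + 1 + c) * u (Suc k)"
    and nonneg: "\<And>k. u k \<ge> 0" and c: "c \<ge> 0"
  defines "S0 \<equiv> \<Sum>j\<le>n. u j * u (n - j)"
    and "S2 \<equiv> \<Sum>j\<le>n. u j * u (n - j) * (2 * real j - real n)^2"
  shows "S2 \<ge> 0" and "S2 \<le> real n * S0"
    and "c \<ge> 1/2 \<Longrightarrow> S2 \<le> (real n / 2 + c) * S0"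
proof -
  have identity: "(real n + c - 1/2) * S2 = real n * (real n + 2*c) / 2 * S0"
    unfolding S2_def S0_def using recurrence_convolution_identity[OF rec, of n] by simp
  have "S0 \<ge> 0" unfolding S0_def by (intro sum_nonneg) (simp add: nonneg)
  show "S2 \<ge> 0" unfolding S2_def by (intro sum_nonneg) (simp add: nonneg)
  have bound: "S2 \<le> B * S0"
    if B: "real n * (real n + 2*c) / 2 \<le> (real n + c - 1/2) * B" and pos: "real n + c - 1/2 > 0" for B
  proof -
    have "(real n + c - 1/2) * S2 \<le> (real n + c - 1/2) * (B * S0)"
      unfolding identity using mult_right_mono[OF B \<open>S0 \<ge> 0\<close>] by (simp add: mult.assoc)
    then show ?thesis using pos by simp
  qed
  show "S2 \<le> real n * S0"
  proof (cases "n = 0")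
    case True then show ?thesis by (simp add: S2_def)
  next
    case False
    then have "0 \<le> real n * (real n - 1)" by simp
    with False c show ?thesis by (intro bound) (simp_all add: field_simps)
  qed
  assume c_half: "c \<ge> 1/2"
  show "S2 \<le> (real n / 2 + c) * S0"
  proof (cases "n = 0 \<and> c = 1/2")
    case True then show ?thesis using \<open>S0 \<ge> 0\<close> c by (simp add: S2_def)
  next
    case False
    have "0 \<le> (real n + 2*c) * (c - 1/2)" using c c_half by simp
    with False c_half show ?thesis by (intro bound) (auto simp: field_simps)
  qed
qed

lemma Cauchy_product_sums_nonneg:
  fixes p q :: "nat \<Rightarrow> real"
  assumes "summable p" "summable q" "\<And>k. p k \<ge> 0" "\<And>k. q k \<ge> 0"
  shows "(\<lambda>n. \<Sum>i\<le>n. p i * q (n - i)) sums (suminf p * suminf q)"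
  using Cauchy_product_sums[of p q] assms by (simp add: abs_of_nonneg)

lemma summable_first_moment:
  fixes u :: "nat \<Rightarrow> real"
  assumes "\<And>k. u k \<ge> 0" and "summable (\<lambda>k. real k ^ 2 * u k)"
  shows "summable (\<lambda>k. real k * u k)"
proof (rule summable_comparison_test[OF _ assms(2)])
  have "real n * u n \<le> real n ^ 2 * u n" for n
  proof -
    have "real n \<le> real n ^ 2" by (cases n) (auto simp: power2_eq_square)
    then show ?thesis using assms(1)[of n] by (rule mult_right_mono)
  qed
  then show "\<exists>N. \<forall>n\<ge>N. norm (real n * u n) \<le> real n ^ 2 * u n"
    using assms(1) by auto
qed

lemma Cauchy_square_moment_sums:
  fixes u :: "nat \<Rightarrow> real"
  assumes nonneg: "\<And>k. u k \<ge> 0"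
    and summable: "summable u" and summable2: "summable (\<lambda>k. real k ^ 2 * u k)"
  defines "A \<equiv> suminf u" and "M1 \<equiv> \<Sum>k. real k * u k" and "M2 \<equiv> \<Sum>k. real k ^ 2 * u k"
  shows "(\<lambda>n. \<Sum>j\<le>n. u j * u (n - j)) sums A^2"
    and "(\<lambda>n. real n * (\<Sum>j\<le>n. u j * u (n - j))) sums (2 * (A * M1))"
    and "(\<lambda>n. \<Sum>j\<le>n. u j * u (n - j) * (2 * real j - real n)^2) sums (2 * (A * M2 - M1^2))"
proof -
  have summable1: "summable (\<lambda>k. real k * u k)"
    by (rule summable_first_moment[OF nonneg summable2])
  have nonneg1: "\<And>k. real k * u k \<ge> 0" and nonneg2: "\<And>k. real k ^ 2 * u k \<ge> 0"
    using nonneg by simp_all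
  show "(\<lambda>n. \<Sum>j\<le>n. u j * u (n - j)) sums A^2"
    unfolding A_def power2_eq_square by (rule Cauchy_product_sums_nonneg[OF summable summable nonneg nonneg])
  have "(\<lambda>n. (\<Sum>i\<le>n. (real i * u i) * u (n - i)) + (\<Sum>i\<le>n. u i * (real (n - i) * u (n - i))))
          sums (M1 * A + A * M1)"
    unfolding A_def M1_def
    by (intro sums_add Cauchy_product_sums_nonneg summable summable1 nonneg nonneg1)
  moreover have "(\<Sum>i\<le>n. (real i * u i) * u (n - i)) + (\<Sum>i\<le>n. u i * (real (n - i) * u (n - i)))
      = real n * (\<Sum>j\<le>n. u j * u (n - j))" for n
  proof -
    have "(\<Sum>i\<le>n. (real i * u i) * u (n - i)) + (\<Sum>i\<le>n. u i * (real (n - i) * u (n - i)))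
        = (\<Sum>j\<le>n. real n * (u j * u (n - j)))"
      by (subst sum.distrib[symmetric], intro sum.cong refl) (auto simp: of_nat_diff algebra_simps)
    then show ?thesis by (simp add: sum_distrib_left)
  qed
  moreover have "M1 * A + A * M1 = 2 * (A * M1)" by simp
  ultimately show "(\<lambda>n. real n * (\<Sum>j\<le>n. u j * u (n - j))) sums (2 * (A * M1))"
    by simp
  have "(\<lambda>n. (\<Sum>i\<le>n. (real i ^ 2 * u i) * u (n - i)) + (\<Sum>i\<le>n. u i * (real (n - i) ^ 2 * u (n - i)))
          - 2 * (\<Sum>i\<le>n. (real i * u i) * (real (n - i) * u (n - i)))) sums (M2 * A + A * M2 - 2 * (M1 * M1))"
    unfolding A_def M1_def M2_def
    by (intro sums_diff sums_add sums_mult Cauchy_product_sums_nonneg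
        summable summable1 summable2 nonneg nonneg1 nonneg2)
  moreover have "(\<Sum>i\<le>n. (real i ^ 2 * u i) * u (n - i)) + (\<Sum>i\<le>n. u i * (real (n - i) ^ 2 * u (n - i)))
          - 2 * (\<Sum>i\<le>n. (real i * u i) * (real (n - i) * u (n - i)))
        = (\<Sum>j\<le>n. u j * u (n - j) * (2 * real j - real n)^2)" for n
  proof -
    have "(\<Sum>i\<le>n. (real i ^ 2 * u i) * u (n - i)) + (\<Sum>i\<le>n. u i * (real (n - i) ^ 2 * u (n - i)))
          - 2 * (\<Sum>i\<le>n. (real i * u i) * (real (n - i) * u (n - i)))
        = (\<Sum>i\<le>n. (real i ^ 2 * u i) * u (n - i) + u i * (real (n - i) ^ 2 * u (n - i))
          - 2 * ((real i * u i) * (real (n - i) * u (n - i))))"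
      by (simp add: sum.distrib sum_subtractf sum_distrib_left)
    also have "\<dots> = (\<Sum>j\<le>n. u j * u (n - j) * (2 * real j - real n)^2)"
      by (intro sum.cong refl) (auto simp: of_nat_diff power2_eq_square algebra_simps)
    finally show ?thesis .
  qed
  moreover have "M2 * A + A * M2 - 2 * (M1 * M1) = 2 * (A * M2 - M1^2)"
    by (simp add: power2_eq_square)
  ultimately show "(\<lambda>n. \<Sum>j\<le>n. u j * u (n - j) * (2 * real j - real n)^2) sums (2 * (A * M2 - M1^2))"
    by simp
qed

lemma recurrence_moment_bounds:
  fixes u :: "nat \<Rightarrow> real" and c s :: real
  assumes rec: "\<And>k. s * u k = (real k + 1) * (real k + 1 + c) * u (Suc k)"
    and nonneg: "\<And>k. u k \<ge> 0" and c: "c \<ge> 0"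
    and summable: "summable u" and summable2: "summable (\<lambda>k. real k ^ 2 * u k)"
  defines "A \<equiv> suminf u" and "M1 \<equiv> \<Sum>k. real k * u k" and "M2 \<equiv> \<Sum>k. real k ^ 2 * u k"
  shows "M1^2 \<le> A * M2" and "A * M2 - M1^2 \<le> A * M1"
    and "c \<ge> 1/2 \<Longrightarrow> A * M2 - M1^2 \<le> (A * M1 + c * A^2) / 2"
proof -
  note sums = Cauchy_square_moment_sums[OF nonneg summable summable2, folded A_def M1_def M2_def]
  note bounds = recurrence_convolution_bounds[OF rec nonneg c]
  have "0 \<le> 2 * (A * M2 - M1^2)"
    by (rule sums_le[OF _ sums_zero sums(3)]) (rule bounds(1))
  then show "M1^2 \<le> A * M2" by simp
  have "2 * (A * M2 - M1^2) \<le> 2 * (A * M1)"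
    by (rule sums_le[OF _ sums(3) sums(2)]) (rule bounds(2))
  then show "A * M2 - M1^2 \<le> A * M1" by simp
  assume "c \<ge> 1/2"
  have "(\<lambda>n. (1/2) * (real n * (\<Sum>j\<le>n. u j * u (n - j))) + c * (\<Sum>j\<le>n. u j * u (n - j)))
          sums ((1/2) * (2 * (A * M1)) + c * A^2)"
    by (intro sums_add sums_mult sums(1,2))
  from sums_le[OF _ sums(3) this] bounds(3)[OF \<open>c \<ge> 1/2\<close>]
  show "A * M2 - M1^2 \<le> (A * M1 + c * A^2) / 2" by (simp add: algebra_simps)
qed

lemma recurrence_moment_identity:
  fixes u :: "nat \<Rightarrow> real" and c s :: real
  assumes rec: "\<And>k. s * u k = (real k + 1) * (real k + 1 + c) * u (Suc k)"
    and nonneg: "\<And>k. u k \<ge> 0"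
    and summable: "summable u" and summable2: "summable (\<lambda>k. real k ^ 2 * u k)"
  shows "s * suminf u = (\<Sum>k. real k ^ 2 * u k) + c * (\<Sum>k. real k * u k)"
proof -
  have "(\<lambda>k. real k ^ 2 * u k + c * (real k * u k)) sums ((\<Sum>k. real k ^ 2 * u k) + c * (\<Sum>k. real k * u k))"
    by (intro sums_add sums_mult summable_sums summable2 summable_first_moment[OF nonneg summable2])
  then have "(\<lambda>k. real (Suc k) ^ 2 * u (Suc k) + c * (real (Suc k) * u (Suc k)))
      sums ((\<Sum>k. real k ^ 2 * u k) + c * (\<Sum>k. real k * u k))"
    by (subst sums_Suc_iff) simp
  moreover have "s * u k = real (Suc k) ^ 2 * u (Suc k) + c * (real (Suc k) * u (Suc k))" for k
    using rec[of k] by (simp add: power2_eq_square algebra_simps)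
  ultimately show ?thesis
    using sums_unique2[OF sums_mult[OF summable_sums[OF summable], of s]] by simp
qed

text \<open>In the three lemmas below an \<open>M1\<close> on the wrong side of \<open>(y - c) A\<close>, substituted into
  \<open>xy A = M2 + c M1\<close> and the variance bound, contradicts the position of \<open>y\<close>.\<close>

lemma first_moment_lt_of_variance_nonneg:
  fixes A M1 M2 c x y :: real
  assumes "A > 0" "M1 \<ge> 0" "c \<ge> 0" "x \<ge> 0" "y > 0"
    and identity: "x * y * A = M2 + c * M1" and variance: "M1^2 \<le> A * M2"
    and "y > x + c"
  shows "M1 < (y - c) * A"
proof (rule ccontr)
  define w where "w = y - c"
  assume "\<not> M1 < (y - c) * A"
  then have "w * A \<le> M1" by (simp add: w_def)
  have "w > x" "w \<ge> 0" using assms by (auto simp: w_def)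
  have "(w * A) * (w * A) \<le> M1 * M1"
    using \<open>w * A \<le> M1\<close> \<open>w \<ge> 0\<close> assms by (intro mult_mono) auto
  moreover have "c * (w * A) * A \<le> c * M1 * A"
    using \<open>w * A \<le> M1\<close> assms by (intro mult_right_mono mult_left_mono) auto
  ultimately have "w * y * A^2 \<le> M1^2 + c * A * M1"
    by (simp add: w_def power2_eq_square algebra_simps)
  also have "\<dots> \<le> x * y * A^2"
    using variance identity by (simp add: power2_eq_square algebra_simps)
  finally have "w * (y * A^2) \<le> x * (y * A^2)" by (simp add: algebra_simps)
  then show False using \<open>w > x\<close> assms by simp
qed

lemma first_moment_gt_of_variance_le_mean:
  fixes A M1 M2 c x y :: real
  assumes "A > 0" "M1 \<ge> 0" "c \<ge> 0" "y > 0"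
    and identity: "x * y * A = M2 + c * M1" and variance: "A * M2 - M1^2 \<le> A * M1"
    and "y < x + c - 1"
  shows "M1 > (y - c) * A"
proof (rule ccontr)
  define w where "w = y - c"
  assume "\<not> M1 > (y - c) * A"
  then have M1_le: "M1 \<le> w * A" by (simp add: w_def)
  with assms have "w \<ge> 0" using mult_neg_pos[of w A] by linarith
  have "x * y * A^2 \<le> M1 * M1 + (c + 1) * A * M1"
    using identity variance by (simp add: power2_eq_square algebra_simps)
  also have "\<dots> \<le> (w * A) * (w * A) + (c + 1) * A * (w * A)"
    using M1_le assms by (intro add_mono mult_mono mult_left_mono) auto
  also have "\<dots> = (w * (w + c + 1)) * A^2" by (simp add: power2_eq_square algebra_simps)
  finally have "x * y * A^2 \<le> (w * (w + c + 1)) * A^2" .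
  moreover have "w * (w + c + 1) < x * y"
  proof -
    have "w * (w + c + 1) \<le> (w + 1) * y" using \<open>c \<ge> 0\<close> \<open>w \<ge> 0\<close> by (simp add: w_def algebra_simps)
    also have "\<dots> < x * y" using assms by (intro mult_strict_right_mono) (auto simp: w_def)
    finally show ?thesis .
  qed
  ultimately show False using \<open>A > 0\<close> by simp
qed

lemma first_moment_gt_of_variance_le_half:
  fixes A M1 M2 c x y :: real
  assumes "A > 0" "M1 \<ge> 0" "c \<ge> 0" "y > 0"
    and identity: "x * y * A = M2 + c * M1" and variance: "A * M2 - M1^2 \<le> (A * M1 + c * A^2) / 2"
    and "y < x + c - 1/2"
  shows "M1 > (y - c) * A"
proof (rule ccontr)
  define w where "w = y - c"
  assume "\<not> M1 > (y - c) * A"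
  then have M1_le: "M1 \<le> w * A" by (simp add: w_def)
  have "x * y * A^2 \<le> (M1 + A/2) * (M1 + c * A)"
    using identity variance by (simp add: power2_eq_square field_simps)
  also have "\<dots> \<le> (w * A + A/2) * (w * A + c * A)"
    using M1_le assms by (intro mult_mono add_mono) auto
  also have "\<dots> = ((w + 1/2) * y) * A^2" by (simp add: w_def power2_eq_square algebra_simps)
  finally have "x * y * A^2 \<le> ((w + 1/2) * y) * A^2" .
  moreover have "(w + 1/2) * y < x * y"
    using assms by (intro mult_strict_right_mono) (auto simp: w_def)
  ultimately show False using mult_strict_right_mono[of "(w + 1/2) * y" "x * y" "A^2"] \<open>A > 0\<close> by simp
qed

text \<open>For \<open>x t > 0\<close>, \<open>besselI c (2 * sqrt (x * t)) = (x * t) powr (c / 2) * bessel_series c x t\<close>;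
  unlike the left-hand side, the series is an entire function of \<open>t\<close>, also for \<open>x = 0\<close>.\<close>

definition bessel_coeff :: "real \<Rightarrow> real \<Rightarrow> nat \<Rightarrow> real" where
  "bessel_coeff c x k = x ^ k * rGamma (real k + c + 1) / fact k"

definition bessel_series :: "real \<Rightarrow> real \<Rightarrow> real \<Rightarrow> real" where
  "bessel_series c x t = (\<Sum>k. bessel_coeff c x k * t ^ k)"

definition marcum_density :: "real \<Rightarrow> real \<Rightarrow> real \<Rightarrow> real" where
  "marcum_density c x t = exp (- x - t) * t powr c * bessel_series c x t"

lemma rGamma_shift_bounds:
  fixes c :: real
  assumes c: "c \<ge> 0"
  shows "rGamma (real k + c + 1) > 0 \<and> rGamma (real k + c + 1) \<le> rGamma (c + 1) / fact k"
proof (induction k)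
  case 0
  show ?case using c by (simp add: rGamma_inverse_Gamma Gamma_real_pos)
next
  case (Suc k)
  define z where "z = real k + c + 1"
  have "z \<ge> real k + 1" using c by (simp add: z_def)
  have IH: "rGamma z > 0" "rGamma z \<le> rGamma (c + 1) / fact k" using Suc by (simp_all add: z_def)
  have "rGamma z / z \<le> (rGamma (c + 1) / fact k) / (real k + 1)"
    using IH \<open>z \<ge> real k + 1\<close> by (intro frac_le) auto
  also have "\<dots> = rGamma (c + 1) / fact (Suc k)" by (simp add: fact_Suc field_simps)
  finally have "rGamma z / z \<le> rGamma (c + 1) / fact (Suc k)" .
  moreover have "rGamma z / z > 0" using IH \<open>z \<ge> real k + 1\<close> by simp
  moreover have "rGamma (real (Suc k) + c + 1) = rGamma z / z"
    using rGamma_plus1[of z] \<open>z \<ge> real k + 1\<close> by (simp add: z_def field_simps)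
  ultimately show ?case by simp
qed

lemma bessel_coeff_nonneg: "c \<ge> 0 \<Longrightarrow> x \<ge> 0 \<Longrightarrow> bessel_coeff c x k \<ge> 0"
  using rGamma_shift_bounds[of c k] by (simp add: bessel_coeff_def)

lemma bessel_coeff_recurrence:
  fixes c x y :: real
  assumes c: "c \<ge> 0"
  shows "(x * y) * (bessel_coeff c x k * y ^ k)
       = (real k + 1) * (real k + 1 + c) * (bessel_coeff c x (Suc k) * y ^ Suc k)"
proof -
  define z where "z = real k + c + 1"
  have z_Suc: "real (Suc k) + c + 1 = z + 1" by (simp add: z_def)
  have next_term: "bessel_coeff c x (Suc k) * y ^ Suc k
      = ((x * y) * (x ^ k * y ^ k) * rGamma (z + 1)) / ((real k + 1) * fact k)"
    unfolding bessel_coeff_def z_Suc by (simp add: fact_Suc mult_ac)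
  have "(real k + 1) * (real k + 1 + c) * (bessel_coeff c x (Suc k) * y ^ Suc k)
      = ((real k + 1) / (real k + 1)) * ((x * y) * (x ^ k * y ^ k) * (z * rGamma (z + 1)) / fact k)"
    unfolding next_term by (simp add: z_def mult_ac)
  also have "\<dots> = (x * y) * (bessel_coeff c x k * y ^ k)"
    unfolding rGamma_plus1 by (simp add: bessel_coeff_def z_def mult_ac)
  finally show ?thesis ..
qed

lemma bessel_term_bound:
  assumes "c \<ge> 0" "x \<ge> 0"
  shows "\<bar>bessel_coeff c x k * t ^ k\<bar> \<le> rGamma (c + 1) * ((x * \<bar>t\<bar>) ^ k / fact k) / fact k"
proof -
  have "\<bar>bessel_coeff c x k * t ^ k\<bar> = x ^ k * \<bar>t\<bar> ^ k * rGamma (real k + c + 1) / fact k"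
    using rGamma_shift_bounds[of c k] assms by (simp add: bessel_coeff_def abs_mult power_abs)
  also have "\<dots> \<le> x ^ k * \<bar>t\<bar> ^ k * (rGamma (c + 1) / fact k) / fact k"
    using rGamma_shift_bounds[of c k] assms by (intro divide_right_mono mult_left_mono) auto
  also have "\<dots> = rGamma (c + 1) * ((x * \<bar>t\<bar>) ^ k / fact k) / fact k"
    by (simp add: power_mult_distrib)
  finally show ?thesis .
qed

lemma bessel_term_bound_exp:
  assumes "c \<ge> 0" "x \<ge> 0"
  shows "\<bar>bessel_coeff c x k * t ^ k\<bar> \<le> rGamma (c + 1) * ((x * \<bar>t\<bar>) ^ k / fact k)"
proof -
  have "B / fact k \<le> B" if "B \<ge> 0" for B :: real
    using that divide_left_mono[of 1 "fact k" B] by (simp add: fact_ge_1)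
  moreover have "0 \<le> rGamma (c + 1) * ((x * \<bar>t\<bar>) ^ k / fact k)"
    using rGamma_shift_bounds[of c 0] assms by simp
  ultimately show ?thesis using bessel_term_bound[OF assms] order_trans by blast
qed

lemma summable_exp_series_scaled: "summable (\<lambda>k. R * (z ^ k / fact k))" for R z :: real
  using summable_exp_generic[of z] by (intro summable_mult) (simp add: divide_inverse mult.commute)

lemma summable_bessel_terms:
  assumes "c \<ge> 0" "x \<ge> 0"
  shows "summable (\<lambda>k. bessel_coeff c x k * t ^ k)"
  by (rule summable_comparison_test[OF _ summable_exp_series_scaled])
    (use bessel_term_bound_exp[OF assms] in \<open>auto simp: real_norm_def\<close>)

lemma summable_square_weighted_bessel_terms:
  fixes c x y :: real
  assumes "c \<ge> 0" "x \<ge> 0" "y \<ge> 0"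
  shows "summable (\<lambda>k. real k ^ 2 * (bessel_coeff c x k * y ^ k))"
proof (rule summable_comparison_test[OF _ summable_exp_series_scaled])
  show "\<exists>N. \<forall>n\<ge>N. norm (real n ^ 2 * (bessel_coeff c x n * y ^ n))
          \<le> rGamma (c + 1) * ((4 * x * y) ^ n / fact n)"
  proof (intro exI allI impI)
    fix n :: nat
    have "real n ^ 2 \<le> 4 ^ n"
    proof -
      have "real n \<le> 2 ^ n" using less_exp[of n] by (simp add: of_nat_less_two_power less_imp_le)
      then have "real n ^ 2 \<le> (2 ^ n) ^ 2" by (intro power_mono) auto
      then show ?thesis by (simp add: power_even_eq[symmetric] power_mult)
    qed
    moreover have "norm (bessel_coeff c x n * y ^ n) \<le> rGamma (c + 1) * ((x * y) ^ n / fact n)"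
      using bessel_term_bound_exp[OF assms(1,2), of n y] assms(3) by simp
    ultimately have "real n ^ 2 * norm (bessel_coeff c x n * y ^ n)
        \<le> 4 ^ n * (rGamma (c + 1) * ((x * y) ^ n / fact n))"
      by (rule mult_mono) auto
    then have "norm (real n ^ 2 * (bessel_coeff c x n * y ^ n))
        \<le> 4 ^ n * (rGamma (c + 1) * ((x * y) ^ n / fact n))"
      by (simp add: abs_mult)
    also have "\<dots> = rGamma (c + 1) * ((4 * x * y) ^ n / fact n)" by (simp add: power_mult_distrib)
    finally show "norm (real n ^ 2 * (bessel_coeff c x n * y ^ n)) \<le> rGamma (c + 1) * ((4 * x * y) ^ n / fact n)" .
  qed
qed

lemma bessel_series_nonneg: "c \<ge> 0 \<Longrightarrow> x \<ge> 0 \<Longrightarrow> t \<ge> 0 \<Longrightarrow> bessel_series c x t \<ge> 0"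
  unfolding bessel_series_def using bessel_coeff_nonneg
  by (intro suminf_nonneg summable_bessel_terms) auto

lemma bessel_series_zero: "bessel_series c 0 t = rGamma (c + 1)"
proof -
  have "(\<lambda>k. bessel_coeff c 0 k * t ^ k) = (\<lambda>k. if k = 0 then rGamma (c + 1) else 0)"
    by (auto simp: bessel_coeff_def fun_eq_iff)
  then show ?thesis unfolding bessel_series_def using sums_single[of 0 "\<lambda>_. rGamma (c + 1)"]
    by (simp add: sums_iff)
qed

lemma power_div_fact_le_exp: "y \<ge> 0 \<Longrightarrow> y ^ n / fact n \<le> exp y" for y :: real
proof -
  assume "y \<ge> 0"
  have s: "(\<lambda>n. y ^ n / fact n) sums exp y"
    using exp_converges[of y] by (simp add: field_simps)
  have "sum (\<lambda>n. y ^ n / fact n) {n} \<le> suminf (\<lambda>n. y ^ n / fact n)"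
    using s \<open>y \<ge> 0\<close> by (intro sum_le_suminf) (auto simp: sums_iff)
  then show ?thesis using s by (simp add: sums_iff)
qed

lemma bessel_series_le_exp:
  assumes c: "c \<ge> 0" and x: "x \<ge> 0" and t: "t \<ge> 0"
  shows "bessel_series c x t \<le> rGamma (c + 1) * exp (2 * x) * exp (t / 2)"
proof -
  define R where "R = rGamma (c + 1)"
  have "R \<ge> 0" using rGamma_shift_bounds[of c 0] c by (simp add: R_def)
  have "(\<lambda>k. R * exp (t / 2) * ((2 * x) ^ k / fact k)) sums (R * exp (t / 2) * exp (2 * x))"
    using exp_converges[of "2 * x"] by (intro sums_mult) (simp add: field_simps)
  moreover have "bessel_coeff c x k * t ^ k \<le> R * exp (t / 2) * ((2 * x) ^ k / fact k)" for k
  proof -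
    have "bessel_coeff c x k * t ^ k \<le> R * ((x * t) ^ k / fact k) / fact k"
      using bessel_term_bound[OF c x, of k t] t by (simp add: R_def)
    \<comment> \<open>Splitting \<open>x t = 2x \<cdot> t/2\<close> keeps the growth in \<open>t\<close> below \<open>exp (t/2)\<close>, for every \<open>x\<close>.\<close>
    also have "\<dots> = R * ((2 * x) ^ k / fact k) * ((t / 2) ^ k / fact k)"
      by (simp add: power_mult_distrib field_simps)
    also have "\<dots> \<le> R * ((2 * x) ^ k / fact k) * exp (t / 2)"
      using power_div_fact_le_exp[of "t/2" k] t x \<open>R \<ge> 0\<close> by (intro mult_left_mono) auto
    finally show ?thesis by (simp add: mult_ac)
  qed
  ultimately have "bessel_series c x t \<le> R * exp (t / 2) * exp (2 * x)"
    unfolding bessel_series_def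
    by (intro sums_le[OF _ summable_sums[OF summable_bessel_terms[OF c x]]]) auto
  then show ?thesis by (simp add: R_def mult_ac)
qed

lemma bessel_series_has_field_derivative:
  assumes "c \<ge> 0" "x \<ge> 0"
  shows "(bessel_series c x has_field_derivative (\<Sum>n. diffs (bessel_coeff c x) n * t ^ n)) (at t)"
  unfolding bessel_series_def[abs_def]
  by (rule termdiffs_strong_converges_everywhere) (rule summable_bessel_terms[OF assms])

lemma times_bessel_series_diffs:
  fixes c x y :: real
  assumes c: "c \<ge> 0" and x: "x \<ge> 0"
  shows "y * (\<Sum>n. diffs (bessel_coeff c x) n * y ^ n) = (\<Sum>k. real k * (bessel_coeff c x k * y ^ k))"
proof -
  define g where "g = (\<lambda>k. real k * (bessel_coeff c x k * y ^ k))"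
  have "(\<lambda>n. y * (diffs (bessel_coeff c x) n * y ^ n)) sums (y * (\<Sum>n. diffs (bessel_coeff c x) n * y ^ n))"
    by (intro sums_mult summable_sums termdiff_converges_all summable_bessel_terms c x)
  moreover have "y * (diffs (bessel_coeff c x) n * y ^ n) = g (Suc n)" for n
    by (simp add: g_def diffs_def)
  ultimately have "(\<lambda>n. g (Suc n)) sums (y * (\<Sum>n. diffs (bessel_coeff c x) n * y ^ n))"
    by simp
  then have "g sums (y * (\<Sum>n. diffs (bessel_coeff c x) n * y ^ n) + g 0)"
    by (simp add: sums_Suc_iff)
  then have "g sums (y * (\<Sum>n. diffs (bessel_coeff c x) n * y ^ n))"
    by (simp add: g_def)
  then show ?thesis by (simp add: g_def sums_iff)
qed

lemma continuous_on_marcum_density: "c \<ge> 0 \<Longrightarrow> x \<ge> 0 \<Longrightarrow> continuous_on {0<..} (marcum_density c x)"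
  unfolding marcum_density_def[abs_def]
  by (intro continuous_intros continuous_at_imp_continuous_on ballI
      DERIV_isCont[OF bessel_series_has_field_derivative]) auto

lemma marcum_density_has_real_derivative:
  fixes c x t :: real
  assumes c: "c \<ge> 0" and x: "x \<ge> 0" and t: "t > 0"
  shows "(marcum_density c x has_real_derivative
           exp (- x - t) * t powr (c - 1) * ((c - t) * bessel_series c x t
             + t * (\<Sum>n. diffs (bessel_coeff c x) n * t ^ n))) (at t)"
proof -
  have "t powr c = t * t powr (c - 1)" using t by (simp add: powr_mult_base)
  then show ?thesis
    unfolding marcum_density_def[abs_def]
    using t by (auto intro!: derivative_eq_intros bessel_series_has_field_derivative[OF c x]
        simp: field_simps)
qed

lemma set_integrable_powr_div_exp_half:
  fixes c :: real
  assumes "c > -1"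
  shows "set_integrable lborel {0<..} (\<lambda>t. t powr c / exp (t/2))"
proof -
  define g where "g = (\<lambda>t::real. t powr c / exp (t/2))"
  have Gamma_integrand:
    "(\<lambda>t. complex_of_real t powr (complex_of_real (c+1) - 1) / of_real (exp (1/2 * t)))
       absolutely_integrable_on {0<..}"
    by (rule absolutely_integrable_Gamma_integral) (use assms in auto)
  have "continuous_on {0<..} g" unfolding g_def by (intro continuous_intros) auto
  then have "(\<lambda>x. indicator {0<..} x *\<^sub>R g x) \<in> borel_measurable borel"
    by (intro borel_measurable_continuous_on_indicator) auto
  then have meas: "(\<lambda>x. indicator {0<..} x *\<^sub>R g x) \<in> borel_measurable lborel"
    by simp
  have "set_integrable lebesgue {0<..} g"
  proof (rule set_integrable_bound[OF Gamma_integrand])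
    show "set_borel_measurable lebesgue {0<..} g"
      unfolding set_borel_measurable_def using meas by (rule measurable_completion)
    have "norm (g t) \<le> norm (complex_of_real t powr (complex_of_real (c+1) - 1) / of_real (exp (1/2 * t)))"
      if "t > 0" for t
      using powr_of_real[of t c] that by (simp add: g_def norm_divide)
    then show "AE t in lebesgue. t \<in> {0<..} \<longrightarrow> norm (g t)
        \<le> norm (complex_of_real t powr (complex_of_real (c+1) - 1) / of_real (exp (1/2 * t)))"
      by auto
  qed
  then show ?thesis unfolding set_integrable_def g_def[symmetric]
    using integrable_completion[OF meas] by simp
qed

lemma set_integrable_marcum_density:
  assumes c: "c \<ge> 0" and x: "x \<ge> 0"
  shows "set_integrable lborel {0<..} (marcum_density c x)"
proof -
  define K where "K = rGamma (c + 1) * exp x"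
  have "K \<ge> 0" using rGamma_shift_bounds[of c 0] c by (simp add: K_def)
  have majorant: "set_integrable lborel {0<..} (\<lambda>t. K * (t powr c / exp (t/2)))"
    using c by (intro set_integrable_mult_right set_integrable_powr_div_exp_half) auto
  have "(\<lambda>t. indicator {0<..} t *\<^sub>R marcum_density c x t) \<in> borel_measurable borel"
    by (rule borel_measurable_continuous_on_indicator[OF _ continuous_on_marcum_density[OF c x]]) auto
  then have meas: "set_borel_measurable lborel {0<..} (marcum_density c x)"
    unfolding set_borel_measurable_def by simp
  show ?thesis
  proof (rule set_integrable_bound[OF majorant meas], rule AE_I2, rule impI)
    fix t :: real assume "t \<in> {0<..}"
    then have t: "t > 0" by simp
    have "norm (marcum_density c x t) = exp (- x - t) * t powr c * bessel_series c x t"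
      using bessel_series_nonneg[OF c x] t by (simp add: marcum_density_def)
    also have "\<dots> \<le> exp (- x - t) * t powr c * (rGamma (c + 1) * exp (2 * x) * exp (t / 2))"
      using bessel_series_le_exp[OF c x] t by (intro mult_left_mono) auto
    also have "\<dots> = K * (t powr c / exp (t/2))"
    proof -
      have "exp (- x - t) * exp (2 * x) * exp (t / 2) = exp x / exp (t/2)"
        by (simp add: exp_add[symmetric] exp_diff[symmetric])
      then show ?thesis by (simp add: K_def field_simps)
    qed
    finally show "norm (marcum_density c x t) \<le> norm (K * (t powr c / exp (t/2)))"
      using \<open>K \<ge> 0\<close> by simp
  qed
qed

lemma tail_integral_split:
  fixes f :: "real \<Rightarrow> real"
  assumes f: "set_integrable lborel {a<..} f" and "a \<le> t"
  shows "(LBINT s:{t..}. f s) = (LBINT s:{a..}. f s) - (LBINT s=a..t. f s)"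
proof -
  have tail: "(LBINT s:{u..}. f s) = (LBINT s=ereal u..\<infinity>. f s)" for u
  proof -
    have "(LBINT s:{u..}. f s) = (LBINT s:{u<..}. f s)"
      by (rule set_integral_discrete_difference[where X="{u}"]) auto
    then show ?thesis by (simp add: interval_integral_Ioi)
  qed
  have "(LBINT s=ereal a..ereal t. f s) + (LBINT s=ereal t..\<infinity>. f s) = (LBINT s=ereal a..\<infinity>. f s)"
    using f \<open>a \<le> t\<close> by (intro interval_integral_sum) (simp add: interval_lebesgue_integrable_def min_def max_def)
  then show ?thesis using tail[of t] tail[of a] by simp
qed

lemma tail_integral_has_real_derivative:
  fixes f :: "real \<Rightarrow> real"
  assumes f: "set_integrable lborel {a<..} f" and cont: "continuous_on {a<..} f" and "a < t"
  shows "((\<lambda>u. LBINT s:{u..}. f s) has_real_derivative (- f t)) (at t)"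
proof -
  define a' where "a' = (a + t) / 2"
  have "a < a'" "a' < t" using \<open>a < t\<close> by (auto simp: a'_def)
  have "((\<lambda>u. LBINT s=a'..u. f s) has_vector_derivative (f t)) (at t within {a'..t+1})"
    using \<open>a' < t\<close> \<open>a < a'\<close>
    by (intro interval_integral_FTC2 continuous_on_subset[OF cont]) auto
  moreover have "at t within {a'..t+1} = at t"
    using \<open>a' < t\<close> by (intro at_within_interior) auto
  ultimately have "((\<lambda>u. LBINT s=a'..u. f s) has_real_derivative (f t)) (at t)"
    by (simp add: has_real_derivative_iff_has_vector_derivative)
  then have "((\<lambda>u. (LBINT s:{a'..}. f s) - (LBINT s=a'..u. f s)) has_real_derivative (- f t)) (at t)"
    using DERIV_diff[OF DERIV_const] by fastforce
  then show ?thesis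
  proof (rule has_field_derivative_transform_within_open[where S="{a'<..}"])
    have "set_integrable lborel {a'<..} f"
      using \<open>a < a'\<close> by (intro set_integrable_subset[OF f]) auto
    then show "(LBINT s:{a'..}. f s) - (LBINT s=a'..u. f s) = (LBINT s:{u..}. f s)"
      if "u \<in> {a'<..}" for u
      using tail_integral_split[of a' f u] that by simp
  qed (use \<open>a' < t\<close> in auto)
qed

lemma marcum_integrand_eq_density:
  fixes \<mu> x s :: real
  assumes mu: "\<mu> \<ge> 1" and x: "x > 0" and s: "s > 0"
  shows "x powr ((1 - \<mu>) / 2) * (s powr ((\<mu> - 1) / 2) * exp (- s - x) * besselI (\<mu> - 1) (2 * sqrt (x * s)))
         = marcum_density (\<mu> - 1) x s"
proof -
  define c where "c = \<mu> - 1"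
  have "c \<ge> 0" using mu by (simp add: c_def)
  have "x * s > 0" using x s by simp
  have "(2 * sqrt (x * s) / 2) powr (2 * real k + c) = (x * s) powr (c / 2) * (x * s) ^ k" for k
  proof -
    have "(2 * sqrt (x * s) / 2) powr (2 * real k + c) = ((x * s) powr (1/2)) powr (2 * real k + c)"
      using \<open>x * s > 0\<close> by (simp add: powr_half_sqrt)
    also have "\<dots> = (x * s) powr (real k + c / 2)" by (simp add: powr_powr field_simps)
    finally show ?thesis using \<open>x * s > 0\<close> by (simp add: powr_add powr_realpow)
  qed
  then have "besselI (\<mu> - 1) (2 * sqrt (x * s)) = (\<Sum>k. (x * s) powr (c / 2) * (bessel_coeff c x k * s ^ k))"
    unfolding besselI_def c_def[symmetric] by (simp add: bessel_coeff_def power_mult_distrib mult_ac)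
  also have "\<dots> = (x * s) powr (c / 2) * bessel_series c x s"
    unfolding bessel_series_def using \<open>c \<ge> 0\<close> x by (intro suminf_mult summable_bessel_terms) auto
  finally have bessel: "besselI (\<mu> - 1) (2 * sqrt (x * s)) = (x * s) powr (c / 2) * bessel_series c x s" .
  have "x powr (- c / 2) * x powr (c / 2) = 1" using x by (simp add: powr_add[symmetric])
  moreover have "s powr (c / 2) * s powr (c / 2) = s powr c" using s by (simp add: powr_add[symmetric])
  moreover have "x powr ((1 - \<mu>) / 2) * (s powr ((\<mu> - 1) / 2) * exp (- s - x) * besselI (\<mu> - 1) (2 * sqrt (x * s)))
      = (x powr (- c / 2) * x powr (c / 2)) * (s powr (c / 2) * s powr (c / 2)) * exp (- s - x) * bessel_series c x s"
    unfolding bessel by (simp add: c_def powr_mult minus_divide_left[symmetric] algebra_simps)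
  ultimately show ?thesis by (simp add: marcum_density_def c_def algebra_simps)
qed

lemma marcumQ_eq_tail_integral:
  fixes \<mu> x t :: real
  assumes mu: "\<mu> \<ge> 1" and x: "x \<ge> 0" and t: "t > 0"
  shows "marcumQ \<mu> x t = (LBINT s:{t..}. marcum_density (\<mu> - 1) x s)"
proof (cases "x = 0")
  case True
  have "marcumQ \<mu> x t = (LBINT s:{t..}. rGamma \<mu> * (s powr (\<mu> - 1) * exp (- s)))"
    using True by (simp add: marcumQ_def upper_Gamma_def rGamma_inverse_Gamma field_simps)
  also have "\<dots> = (LBINT s:{t..}. marcum_density (\<mu> - 1) x s)"
    by (rule set_lebesgue_integral_cong) (auto simp: True marcum_density_def bessel_series_zero)
  finally show ?thesis .
next
  case False
  then show ?thesis
    using x t unfolding marcumQ_def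
    by (auto intro!: set_lebesgue_integral_cong marcum_integrand_eq_density mu simp flip: set_integral_mult_right)
qed

lemma marcumQ_has_real_derivative:
  fixes \<mu> x t :: real
  assumes mu: "\<mu> \<ge> 1" and x: "x \<ge> 0" and t: "t > 0"
  shows "((\<lambda>y. marcumQ \<mu> x y) has_real_derivative (- marcum_density (\<mu> - 1) x t)) (at t)"
proof (rule has_field_derivative_transform_within_open[where S="{0<..}"])
  have "\<mu> - 1 \<ge> 0" using mu by simp
  from tail_integral_has_real_derivative[OF set_integrable_marcum_density[OF this x]
      continuous_on_marcum_density[OF this x] t]
  show "((\<lambda>u. LBINT s:{u..}. marcum_density (\<mu> - 1) x s) has_real_derivative - marcum_density (\<mu> - 1) x t) (at t)" .
qed (use mu x t marcumQ_eq_tail_integral in auto)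

lemma marcumQ_second_deriv:
  fixes \<mu> x y :: real
  assumes mu: "\<mu> \<ge> 1" and x: "x \<ge> 0" and y: "y > 0"
  defines "u \<equiv> \<lambda>k. bessel_coeff (\<mu> - 1) x k * y ^ k"
  shows "deriv (deriv (\<lambda>t. marcumQ \<mu> x t)) y
       = - (exp (- x - y) * y powr (\<mu> - 2) * ((\<mu> - 1 - y) * suminf u + (\<Sum>k. real k * u k)))"
proof -
  have c: "\<mu> - 1 \<ge> 0" using mu by simp
  have "eventually (\<lambda>t. t \<in> {0<..}) (nhds y)"
    using y by (intro eventually_nhds_in_open) auto
  then have "eventually (\<lambda>t. deriv (\<lambda>t. marcumQ \<mu> x t) t = - marcum_density (\<mu> - 1) x t) (nhds y)"
    by eventually_elim (auto intro!: DERIV_imp_deriv marcumQ_has_real_derivative mu x)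
  then have "deriv (deriv (\<lambda>t. marcumQ \<mu> x t)) y = deriv (\<lambda>t. - marcum_density (\<mu> - 1) x t) y"
    by (rule deriv_cong_ev) simp
  also have "\<dots> = - (exp (- x - y) * y powr (\<mu> - 1 - 1) * ((\<mu> - 1 - y) * bessel_series (\<mu> - 1) x y
                    + y * (\<Sum>n. diffs (bessel_coeff (\<mu> - 1) x) n * y ^ n)))"
    by (intro DERIV_imp_deriv DERIV_minus marcum_density_has_real_derivative c x y)
  finally show ?thesis
    by (simp add: u_def bessel_series_def times_bessel_series_diffs[OF c x])
qed

lemma bessel_terms_moment_sign:
  fixes c x y :: real
  assumes c: "c \<ge> 0" and x: "x \<ge> 0" and y: "y > 0"
  defines "u \<equiv> \<lambda>k. bessel_coeff c x k * y ^ k"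
  defines "A \<equiv> suminf u" and "M1 \<equiv> \<Sum>k. real k * u k"
  shows "y > x + c \<Longrightarrow> M1 < (y - c) * A" and "y < x + c - 1 \<Longrightarrow> M1 > (y - c) * A"
    and "c \<ge> 1/2 \<Longrightarrow> y < x + c - 1/2 \<Longrightarrow> M1 > (y - c) * A"
proof -
  define M2 where "M2 = (\<Sum>k. real k ^ 2 * u k)"
  have rec: "(x * y) * u k = (real k + 1) * (real k + 1 + c) * u (Suc k)" for k
    unfolding u_def by (rule bessel_coeff_recurrence[OF c])
  have nonneg: "u k \<ge> 0" for k
    unfolding u_def using bessel_coeff_nonneg[OF c x] y by simp
  have summable: "summable u"
    unfolding u_def using c x by (rule summable_bessel_terms)
  have summable2: "summable (\<lambda>k. real k ^ 2 * u k)"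
    unfolding u_def using c x y by (intro summable_square_weighted_bessel_terms) auto
  have "A > 0"
    unfolding A_def using summable nonneg rGamma_shift_bounds[OF c, of 0]
    by (intro suminf_pos2[of _ 0]) (auto simp: u_def bessel_coeff_def)
  have "M1 \<ge> 0"
    unfolding M1_def using nonneg summable_first_moment[OF nonneg summable2] by (simp add: suminf_nonneg)
  have identity: "x * y * A = M2 + c * M1"
    unfolding A_def M1_def M2_def by (rule recurrence_moment_identity[OF rec nonneg summable summable2])
  note variance = recurrence_moment_bounds[OF rec nonneg c summable summable2, folded A_def M1_def M2_def]
  show "y > x + c \<Longrightarrow> M1 < (y - c) * A"
    by (rule first_moment_lt_of_variance_nonneg[OF \<open>A > 0\<close> \<open>M1 \<ge> 0\<close> c x y identity variance(1)])
  show "y < x + c - 1 \<Longrightarrow> M1 > (y - c) * A"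
    by (rule first_moment_gt_of_variance_le_mean[OF \<open>A > 0\<close> \<open>M1 \<ge> 0\<close> c y identity variance(2)])
  show "c \<ge> 1/2 \<Longrightarrow> y < x + c - 1/2 \<Longrightarrow> M1 > (y - c) * A"
    by (rule first_moment_gt_of_variance_le_half[OF \<open>A > 0\<close> \<open>M1 \<ge> 0\<close> c y identity variance(3)])
qed

theorem theorem2:
  fixes \<mu> x y :: real
  assumes "\<mu> \<ge> 1" and "x \<ge> 0" and "y > 0"
  shows "(y > x + \<mu> - 1 \<longrightarrow> deriv (deriv (\<lambda>t. marcumQ \<mu> x t)) y > 0)
       \<and> (y < x + \<mu> - 2 \<longrightarrow> deriv (deriv (\<lambda>t. marcumQ \<mu> x t)) y < 0)
       \<and> (\<mu> \<ge> 3/2 \<and> y < x + \<mu> - 3/2 \<longrightarrow> deriv (deriv (\<lambda>t. marcumQ \<mu> x t)) y < 0)"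
proof -
  define u where "u = (\<lambda>k. bessel_coeff (\<mu> - 1) x k * y ^ k)"
  define E where "E = (\<mu> - 1 - y) * suminf u + (\<Sum>k. real k * u k)"
  define P where "P = exp (- x - y) * y powr (\<mu> - 2)"
  have "P > 0" using assms by (simp add: P_def)
  have second_deriv: "deriv (deriv (\<lambda>t. marcumQ \<mu> x t)) y = - (P * E)"
    using marcumQ_second_deriv[OF assms] by (simp add: P_def E_def u_def)
  have "\<mu> - 1 \<ge> 0" using assms by simp
  note sign = bessel_terms_moment_sign[OF this assms(2,3)]
  have "E < 0" if "y > x + \<mu> - 1"
    using sign(1) that by (simp add: E_def u_def algebra_simps)
  moreover have "E > 0" if "y < x + \<mu> - 2"
    using sign(2) that by (simp add: E_def u_def algebra_simps)
  moreover have "E > 0" if "\<mu> \<ge> 3/2" "y < x + \<mu> - 3/2"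
    using sign(3) that by (simp add: E_def u_def algebra_simps)
  ultimately show ?thesis
    unfolding second_deriv using \<open>P > 0\<close> by (simp add: mult_pos_neg)
qed

end
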